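(* Let $n,p\in\mathbb{N}$, $0\le\lambda\le1$. Let $f$ be analytic in $\mathrm{U}=\{|z|<1\}$ of the form $f(z)=z^p+\sum_{k=p+n}^\infty a_kz^k$, put $\mathcal{F}_\lambda(z)=(1-\lambda)f(z)+\lambda zf'(z)$, and assume $\mathcal{F}_\lambda(z)\mathcal{F}_\lambda'(z)\neq0$ for all $z\in\mathrm{U}\setminus\{0\}$. Let $\delta\in[0,p)$ and $$\varsigma=\begin{cases} -\dfrac{n\delta}{2(p-\delta)}, & \delta\in[0,p/2],\\[2mm] -\dfrac{n(p-\delta)}{2\delta}, & \delta\in[p/2,p).\end{cases}$$ If $$\operatorname{Re}\left[-\frac{z\mathcal{F}_\lambda'(z)}{\mathcal{F}_\lambda(z)}+1+\frac{z\mathcal{F}_\lambda''(z)}{\mathcal{F}_\lambda'(z)}\right]>\varsigma,\quad z\in\mathrm{U},$$ then $\operatorname{Re}\dfrac{z\mathcal{F}_\lambda'(z)}{\mathcal{F}_\lambda(z)}>\delta$ for all $z\in\mathrm{U}$. *)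

theory Defs
  imports "HOL-Complex_Analysis.Complex_Analysis"
begin

definition Flam :: "real \<Rightarrow> (complex \<Rightarrow> complex) \<Rightarrow> complex \<Rightarrow> complex" where
  "Flam lam f z = (1 - of_real lam) * f z + of_real lam * z * deriv f z"

definition varsigma :: "nat \<Rightarrow> nat \<Rightarrow> real \<Rightarrow> real" where
  "varsigma n p \<delta> =
     (if \<delta> \<le> real p / 2 then - (real n * \<delta>) / (2 * (real p - \<delta>))
      else - (real n * (real p - \<delta>)) / (2 * \<delta>))"

end

theory Submission
  imports Defs
begin

text \<open>
  Writing f(z) = z^p + z^(p+n) g(z) gives F(z) = z^p \<Phi>(z) for F = Flam lam f, with
  \<Phi>(0) \<noteq> 0 and \<Phi> - \<Phi>(0) vanishing to order n. Hence q = z F'/F = p + z^n R is holomorphic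
  on the disc, and the hypothesis says Re (z q'/q) > \<sigma> = varsigma n p \<delta>. If Re q \<le> \<delta>
  somewhere, let z0 be a point of least modulus with Re q(z0) = \<delta>. Then z0 q'(z0) is
  real, because Re q is minimal at z0 on its circle; and the Moebius image
  \<omega> = (q - p)/(q + p - 2\<delta>) maps the closed disc of radius |z0| into the closed unit disc,
  vanishes to order n at 0 and has |\<omega>(z0)| = 1, so Jack's lemma gives
  z0 \<omega>'(z0)/\<omega>(z0) \<ge> n. Together these force Re (z0 q'(z0)/q(z0)) \<le> \<sigma>,
  a contradiction.
\<close>

lemma has_real_derivative_Re_of_real:
  assumes "(h has_field_derivative D) (at (of_real t))"
  shows "((\<lambda>x. Re (h (of_real x))) has_real_derivative Re D) (at t)"
  using has_field_derivative_Re[OF has_vector_derivative_real_field[OF assms]] by simp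

lemma Im_mult_deriv_eq_0_if_Re_min_on_sphere:
  assumes "(h has_field_derivative h') (at z0)"
    and "\<forall>z\<in>sphere 0 (norm z0). Re (h z0) \<le> Re (h z)"
  shows "Im (z0 * h') = 0"
proof -
  have D: "((\<lambda>w. h (z0 * exp (\<i> * w))) has_field_derivative h' * (z0 * (exp (\<i> * 0) * \<i>))) (at (of_real 0))"
    by (rule DERIV_chain2[where g = "\<lambda>w. z0 * exp (\<i> * w)"])
       (use assms(1) in simp, auto intro!: derivative_eq_intros)
  have "((\<lambda>t. Re (h (z0 * exp (\<i> * of_real t)))) has_real_derivative Re (h' * (z0 * \<i>))) (at 0)"
    using has_real_derivative_Re_of_real[OF D] by simp
  then have "Re (h' * (z0 * \<i>)) = 0"
    by (rule DERIV_local_min[of _ _ _ 1]) (use assms(2) in \<open>auto simp: norm_mult\<close>)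
  then show ?thesis by (simp add: algebra_simps)
qed

lemma norm_power_mult_le_by_maximum_modulus:
  fixes S :: "complex \<Rightarrow> complex"
  assumes "r > 0" and "S holomorphic_on ball 0 r" and "continuous_on (cball 0 r) S"
    and "\<forall>w\<in>sphere 0 r. norm (w ^ n * S w) \<le> 1"
    and "z \<in> cball 0 r"
  shows "norm (z ^ n * S z) \<le> (norm z / r) ^ n"
proof -
  have "norm (S z) \<le> 1 / r ^ n"
  proof (rule maximum_modulus_frontier[of S "cball 0 r"])
    fix w :: complex assume "w \<in> frontier (cball 0 r)"
    then have "norm w = r" "r ^ n * norm (S w) \<le> 1"
      using assms(1,4) by (auto simp: norm_mult norm_power)
    then show "norm (S w) \<le> 1 / r ^ n" using assms(1) by (simp add: field_simps)
  qed (use assms in auto)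
  then have "norm z ^ n * norm (S z) \<le> norm z ^ n * (1 / r ^ n)"
    by (rule mult_left_mono) simp
  then show ?thesis by (simp add: norm_mult norm_power power_divide)
qed

lemma jack_lemma:
  fixes \<omega> S :: "complex \<Rightarrow> complex"
  assumes "z0 \<noteq> 0"
    and "S holomorphic_on ball 0 (norm z0)" and "continuous_on (cball 0 (norm z0)) S"
    and \<omega>_eq: "\<forall>z\<in>cball 0 (norm z0). \<omega> z = z ^ n * S z"
    and \<omega>_le: "\<forall>z\<in>cball 0 (norm z0). norm (\<omega> z) \<le> 1"
    and \<omega>_z0: "norm (\<omega> z0) = 1"
    and D\<omega>: "(\<omega> has_field_derivative \<omega>') (at z0)"
  shows "real n \<le> Re (cnj (\<omega> z0) * \<omega>' * z0)"
proof (rule ccontr)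
  assume neg: "\<not> ?thesis"
  \<comment> \<open>\<phi> \<le> 0 on (0, 1) and \<phi> 1 = 0, so \<phi> cannot be decreasing to the left of 1.\<close>
  define \<phi> where "\<phi> t = Re (cnj (\<omega> z0) * \<omega> (of_real t * z0)) - t ^ n" for t :: real
  have D: "((\<lambda>x. cnj (\<omega> z0) * \<omega> (x * z0)) has_field_derivative cnj (\<omega> z0) * (\<omega>' * z0)) (at (of_real 1))"
    by (rule DERIV_cmult, rule DERIV_chain2[where g = "\<lambda>x. x * z0"])
       (use D\<omega> in simp, auto intro!: derivative_eq_intros)
  have "(\<phi> has_real_derivative Re (cnj (\<omega> z0) * \<omega>' * z0) - real n * 1 ^ (n - 1)) (at 1)"
    unfolding \<phi>_def[abs_def]
    using DERIV_diff[OF has_real_derivative_Re_of_real[OF D] DERIV_pow[of n 1]] by (simp add: mult.assoc)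
  moreover have "Re (cnj (\<omega> z0) * \<omega>' * z0) - real n * 1 ^ (n - 1) < 0"
    using neg by simp
  ultimately obtain e where "e > 0" and e: "\<And>h. h > 0 \<Longrightarrow> h < e \<Longrightarrow> \<phi> 1 < \<phi> (1 - h)"
    using DERIV_neg_dec_left by blast
  define t where "t = 1 - min (e / 2) (1 / 2)"
  have t: "0 < t" "t < 1" "\<phi> 1 < \<phi> t"
    using \<open>e > 0\<close> e[of "min (e / 2) (1 / 2)"] by (auto simp: t_def)
  have "\<omega> z0 * cnj (\<omega> z0) = 1"
    using complex_norm_square[of "\<omega> z0"] \<omega>_z0 by simp
  then have "\<phi> 1 = 0"
    by (simp add: \<phi>_def mult.commute)
  moreover have "\<phi> t \<le> 0"
  proof -
    have tz: "of_real t * z0 \<in> cball 0 (norm z0)"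
      using t by (simp add: norm_mult mult_left_le_one_le)
    have "Re (cnj (\<omega> z0) * \<omega> (of_real t * z0)) \<le> norm (\<omega> (of_real t * z0))"
      using complex_Re_le_cmod[of "cnj (\<omega> z0) * \<omega> (of_real t * z0)"] \<omega>_z0
      by (simp add: norm_mult)
    also have "\<dots> = norm ((of_real t * z0) ^ n * S (of_real t * z0))"
      using bspec[OF \<omega>_eq tz] by simp
    also have "\<dots> \<le> (norm (of_real t * z0) / norm z0) ^ n"
    proof (rule norm_power_mult_le_by_maximum_modulus[OF _ assms(2,3) _ tz])
      show "\<forall>w\<in>sphere 0 (norm z0). norm (w ^ n * S w) \<le> 1"
      proof
        fix w :: complex assume "w \<in> sphere 0 (norm z0)"
        then have "w \<in> cball 0 (norm z0)" by simp
        then show "norm (w ^ n * S w) \<le> 1" using \<omega>_eq \<omega>_le by simp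
      qed
    qed (use assms(1) in simp)
    also have "\<dots> = t ^ n"
      using t assms(1) by (simp add: norm_mult)
    finally show ?thesis by (simp add: \<phi>_def)
  qed
  ultimately show False using t by simp
qed

lemma exists_minimal_norm_point_on_level:
  fixes u :: "'a::{real_normed_vector,heine_borel} \<Rightarrow> real"
  assumes "continuous_on (cball 0 r) u" and "\<delta> < u 0"
    and "norm z1 \<le> r" and "u z1 \<le> \<delta>"
  obtains z0 where "z0 \<noteq> 0" and "norm z0 \<le> r" and "u z0 = \<delta>"
    and "\<forall>z\<in>cball 0 (norm z0). \<delta> \<le> u z"
proof -
  define T where "T = cball 0 (norm z1) \<inter> u -` {..\<delta>}"
  have contT: "continuous_on (cball 0 (norm z1)) u"
    by (rule continuous_on_subset[OF assms(1)]) (use assms(3) in auto)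
  have "closed T"
    unfolding T_def by (rule continuous_closed_preimage[OF contT]) auto
  then have "compact T"
    by (simp add: compact_eq_bounded_closed T_def bounded_Int)
  moreover have "z1 \<in> T" using assms(4) by (simp add: T_def)
  ultimately obtain z0 where "z0 \<in> T" and z0min: "\<And>y. y \<in> T \<Longrightarrow> norm z0 \<le> norm y"
    using continuous_attains_inf[of T norm] continuous_on_norm_id by blast
  then have z0: "norm z0 \<le> norm z1" "u z0 \<le> \<delta>" by (auto simp: T_def)
  have "z0 \<noteq> 0" using z0(2) assms(2) by auto
  have inner: "\<delta> < u z" if "norm z < norm z0" for z
  proof (rule ccontr)
    assume "\<not> \<delta> < u z"
    then have "z \<in> T" using that z0(1) by (simp add: T_def)
    then show False using z0min[of z] that by simp
  qed
  have ge: "\<forall>z\<in>cball 0 (norm z0). \<delta> \<le> u z"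
  proof -
    have "continuous_on (cball 0 (norm z0)) u"
      by (rule continuous_on_subset[OF assms(1)]) (use assms(3) z0(1) in auto)
    then have "closed (cball 0 (norm z0) \<inter> u -` {\<delta>..})"
      by (rule continuous_closed_preimage) auto
    moreover have "ball 0 (norm z0) \<subseteq> cball 0 (norm z0) \<inter> u -` {\<delta>..}"
      using inner by (auto simp: less_imp_le)
    ultimately have "closure (ball 0 (norm z0)) \<subseteq> u -` {\<delta>..}"
      using closure_minimal by blast
    then show ?thesis
      using closure_ball[of 0 "norm z0"] \<open>z0 \<noteq> 0\<close> by auto
  qed
  have "\<delta> \<le> u z0" by (rule bspec[OF ge]) simp
  then have "u z0 = \<delta>" using z0(2) by simp
  then show thesis
    using that[OF \<open>z0 \<noteq> 0\<close> _ _ ge] z0(1) assms(3) by simp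
qed

lemma cnj_diff_eq_minus_add_if_Re_eq:
  assumes "Re w = \<delta>"
  shows "cnj (w - of_real P) = - (w + of_real (P - 2 * \<delta>))"
  using assms by (simp add: complex_eq_iff)

lemma norm_diff_le_norm_add_if_Re_ge:
  assumes "\<delta> \<le> Re w" and "\<delta> \<le> P"
  shows "norm (w - of_real P) \<le> norm (w + of_real (P - 2 * \<delta>))"
proof -
  have "(Re w - P)\<^sup>2 \<le> (Re w + (P - 2 * \<delta>))\<^sup>2"
    using assms mult_nonneg_nonneg[of "Re w - \<delta>" "P - \<delta>"] by (simp add: power2_eq_square algebra_simps)
  then show ?thesis
    unfolding norm_complex_def by (intro real_sqrt_le_mono) simp
qed

lemma Re_cnj_moebius_mult_deriv:
  fixes w X :: complex
  assumes "Re w = \<delta>" and "\<delta> < P"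
  shows "Re (cnj ((w - of_real P) / (w + of_real (P - 2 * \<delta>)))
             * (X * (2 * of_real (P - \<delta>)) / (w + of_real (P - 2 * \<delta>))\<^sup>2))
         = - 2 * (P - \<delta>) * Re X / ((P - \<delta>)\<^sup>2 + (Im w)\<^sup>2)"
proof -
  define Q where "Q = w + of_real (P - 2 * \<delta>)"
  have "Re Q = P - \<delta>" "Im Q = Im w"
    using assms(1) by (simp_all add: Q_def)
  then have QQ: "Q * cnj Q = of_real ((P - \<delta>)\<^sup>2 + (Im w)\<^sup>2)"
    unfolding complex_mult_cnj by simp
  have "Q \<noteq> 0" using \<open>Re Q = P - \<delta>\<close> assms(2) by auto
  have "cnj ((w - of_real P) / Q) * (X * (2 * of_real (P - \<delta>)) / Q\<^sup>2)
        = - Q / cnj Q * (X * (2 * of_real (P - \<delta>)) / Q\<^sup>2)"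
    unfolding complex_cnj_divide cnj_diff_eq_minus_add_if_Re_eq[OF assms(1)] Q_def ..
  also have "\<dots> = - (X * (2 * of_real (P - \<delta>))) / (Q * cnj Q)"
    using \<open>Q \<noteq> 0\<close> by (simp add: field_simps power2_eq_square)
  also have "\<dots> = - (X * (2 * of_real (P - \<delta>))) / of_real ((P - \<delta>)\<^sup>2 + (Im w)\<^sup>2)"
    by (simp only: QQ)
  finally show ?thesis
    by (simp add: Q_def Re_divide_of_real flip: divide_minus_left) (simp add: algebra_simps)
qed

lemma jack_lemma_at_half_plane_boundary:
  fixes q R :: "complex \<Rightarrow> complex"
  assumes "\<delta> < real p"
    and holq: "q holomorphic_on ball 0 1" and holR: "R holomorphic_on ball 0 1"
    and q_eq: "\<forall>z\<in>ball 0 1. q z = of_nat p + z ^ n * R z"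
    and "z0 \<in> ball 0 1" and "z0 \<noteq> 0"
    and ge: "\<forall>z\<in>cball 0 (norm z0). \<delta> \<le> Re (q z)" and Re_q_z0: "Re (q z0) = \<delta>"
  shows "real n \<le> - 2 * (real p - \<delta>) * Re (z0 * deriv q z0) / ((real p - \<delta>)\<^sup>2 + (Im (q z0))\<^sup>2)"
proof -
  have sub: "cball 0 (norm z0) \<subseteq> ball 0 1"
    using \<open>z0 \<in> ball 0 1\<close> by auto
  define c :: complex where "c = of_real (real p - 2 * \<delta>)"
  define \<omega> where "\<omega> z = (q z - of_nat p) / (q z + c)" for z
  define S where "S z = R z / (q z + c)" for z
  have nz: "q z + c \<noteq> 0" if "z \<in> cball 0 (norm z0)" for z
  proof -
    have "0 < Re (q z + c)" using ge that assms(1) by (force simp: c_def)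
    then show ?thesis by (metis zero_complex.sel(1) order_less_irrefl)
  qed
  have \<omega>_eq: "\<forall>z\<in>cball 0 (norm z0). \<omega> z = z ^ n * S z"
    using q_eq sub by (force simp: \<omega>_def S_def)
  have \<omega>_le: "\<forall>z\<in>cball 0 (norm z0). norm (\<omega> z) \<le> 1"
  proof
    fix z :: complex assume z: "z \<in> cball 0 (norm z0)"
    have "norm (q z - of_real (real p)) \<le> norm (q z + c)"
      unfolding c_def using ge z assms(1) by (intro norm_diff_le_norm_add_if_Re_ge) auto
    then show "norm (\<omega> z) \<le> 1"
      using nz[OF z] by (simp add: \<omega>_def norm_divide divide_le_eq_1)
  qed
  have "norm (q z0 - of_nat p) = norm (q z0 + c)"
    using arg_cong[OF cnj_diff_eq_minus_add_if_Re_eq[OF Re_q_z0, of "real p"], of norm]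
    by (simp only: complex_mod_cnj norm_minus_cancel c_def of_real_of_nat_eq)
  then have "norm (\<omega> z0) = 1"
    using nz[of z0] by (simp add: \<omega>_def norm_divide)
  define \<omega>' where "\<omega>' = deriv q z0 * (2 * of_real (real p - \<delta>)) / (q z0 + c)\<^sup>2"
  have D\<omega>: "(\<omega> has_field_derivative \<omega>') (at z0)"
    unfolding \<omega>_def[abs_def] \<omega>'_def using nz[of z0] holomorphic_derivI[OF holq open_ball \<open>z0 \<in> ball 0 1\<close>]
    by (auto intro!: derivative_eq_intros simp: c_def power2_eq_square algebra_simps)
  have holS: "S holomorphic_on ball 0 (norm z0)"
    unfolding S_def using nz sub
    by (auto intro!: holomorphic_intros holomorphic_on_subset[OF holR]
        holomorphic_on_subset[OF holq])
  have contS: "continuous_on (cball 0 (norm z0)) S"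
    unfolding S_def using nz sub
    by (auto intro!: continuous_intros
        continuous_on_subset[OF holomorphic_on_imp_continuous_on[OF holq]]
        continuous_on_subset[OF holomorphic_on_imp_continuous_on[OF holR]])
  have "real n \<le> Re (cnj (\<omega> z0) * (\<omega>' * z0))"
    using jack_lemma[OF \<open>z0 \<noteq> 0\<close> holS contS \<omega>_eq \<omega>_le \<open>norm (\<omega> z0) = 1\<close> D\<omega>]
    by (simp add: mult.assoc)
  also have "\<dots> = - 2 * (real p - \<delta>) * Re (z0 * deriv q z0) / ((real p - \<delta>)\<^sup>2 + (Im (q z0))\<^sup>2)"
    using Re_cnj_moebius_mult_deriv[OF Re_q_z0 assms(1), of "z0 * deriv q z0"]
    by (simp add: \<omega>_def \<omega>'_def c_def mult_ac)
  finally show ?thesis .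
qed

lemma varsigma_eq:
  "varsigma n p \<delta> = - real n / 2 * (if \<delta> \<le> real p / 2 then \<delta> / (real p - \<delta>) else (real p - \<delta>) / \<delta>)"
  by (simp add: varsigma_def)

text \<open>
  With d = p - \<delta>, varsigma n p \<delta> is the supremum over real y of
  - n \<delta> (d^2 + y^2) / (2 d (\<delta>^2 + y^2)): attained at y = 0 when \<delta> > p/2, approached as
  y \<rightarrow> \<infinity> when \<delta> \<le> p/2.
\<close>

lemma mult_div_le_varsigma:
  fixes x y \<delta> :: real
  assumes "0 \<le> \<delta>" and "\<delta> < real p"
    and "real n * ((real p - \<delta>)\<^sup>2 + y\<^sup>2) \<le> - 2 * x * (real p - \<delta>)"
  shows "x * \<delta> / (\<delta>\<^sup>2 + y\<^sup>2) \<le> varsigma n p \<delta>"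
proof (cases "\<delta> = 0")
  case True
  then show ?thesis by (simp add: varsigma_def)
next
  case False
  define d where "d = real p - \<delta>"
  define N where "N = \<delta>\<^sup>2 + y\<^sup>2"
  have "0 < \<delta>" "0 < d" "0 < N"
    using assms False by (auto simp: d_def N_def add_pos_nonneg)
  have "\<delta> * (real n * (d\<^sup>2 + y\<^sup>2)) \<le> \<delta> * (- 2 * x * d)"
    using assms(3) \<open>0 < \<delta>\<close> by (intro mult_left_mono) (auto simp: d_def)
  then have "x * \<delta> / N \<le> - real n / 2 * (\<delta> * (d\<^sup>2 + y\<^sup>2) / (d * N))"
    using \<open>0 < d\<close> \<open>0 < N\<close> by (simp add: field_simps)
  also have "\<dots> \<le> varsigma n p \<delta>"
  proof -
    have "(if \<delta> \<le> real p / 2 then \<delta> / d else d / \<delta>) \<le> \<delta> * (d\<^sup>2 + y\<^sup>2) / (d * N)"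
    proof (cases "\<delta> \<le> real p / 2")
      case True
      then have "\<delta>\<^sup>2 \<le> d\<^sup>2" using \<open>0 < \<delta>\<close> by (simp add: d_def power_mono)
      have "\<delta> / d = \<delta> * N / (d * N)" using \<open>0 < N\<close> by simp
      also have "\<dots> \<le> \<delta> * (d\<^sup>2 + y\<^sup>2) / (d * N)"
        using \<open>\<delta>\<^sup>2 \<le> d\<^sup>2\<close> \<open>0 < \<delta>\<close> \<open>0 < d\<close> \<open>0 < N\<close>
        by (intro divide_right_mono mult_left_mono) (auto simp: N_def)
      finally show ?thesis using True by simp
    next
      case False
      then have "d\<^sup>2 * y\<^sup>2 \<le> \<delta>\<^sup>2 * y\<^sup>2"
        using \<open>0 < d\<close> by (intro mult_right_mono power_mono) (auto simp: d_def)
      have "d / \<delta> = d\<^sup>2 * N / (\<delta> * (d * N))"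
        using \<open>0 < \<delta>\<close> \<open>0 < d\<close> \<open>0 < N\<close> by (simp add: power2_eq_square)
      also have "\<dots> \<le> \<delta>\<^sup>2 * (d\<^sup>2 + y\<^sup>2) / (\<delta> * (d * N))"
        using \<open>d\<^sup>2 * y\<^sup>2 \<le> \<delta>\<^sup>2 * y\<^sup>2\<close> \<open>0 < \<delta>\<close> \<open>0 < d\<close> \<open>0 < N\<close>
        by (intro divide_right_mono) (auto simp: N_def algebra_simps)
      also have "\<dots> = \<delta> * (d\<^sup>2 + y\<^sup>2) / (d * N)"
        using \<open>0 < \<delta>\<close> by (simp add: power2_eq_square)
      finally show ?thesis using False by simp
    qed
    then show ?thesis
      unfolding varsigma_eq d_def[symmetric] by (intro mult_left_mono_neg) auto
  qed
  finally show ?thesis by (simp add: N_def)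
qed

lemma Re_gt_if_Re_log_deriv_gt_varsigma:
  fixes q R :: "complex \<Rightarrow> complex"
  assumes "n \<ge> 1" and \<delta>: "0 \<le> \<delta>" "\<delta> < real p"
    and holq: "q holomorphic_on ball 0 1" and holR: "R holomorphic_on ball 0 1"
    and q_eq: "\<forall>z\<in>ball 0 1. q z = of_nat p + z ^ n * R z"
    and hyp: "\<forall>z\<in>ball 0 1 - {0}. varsigma n p \<delta> < Re (z * deriv q z / q z)"
  shows "\<forall>z\<in>ball 0 1. \<delta> < Re (q z)"
proof (rule ccontr)
  assume "\<not> ?thesis"
  then obtain z1 where z1: "z1 \<in> ball 0 1" "Re (q z1) \<le> \<delta>" by (auto simp: not_less)
  have "continuous_on (cball 0 (norm z1)) (\<lambda>z. Re (q z))"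
    using z1(1)
    by (intro continuous_intros holomorphic_on_imp_continuous_on holomorphic_on_subset[OF holq]) auto
  moreover have "\<delta> < Re (q 0)"
    using q_eq assms(1) \<delta>(2) by (simp add: power_0_left)
  ultimately obtain z0 where "z0 \<noteq> 0" "norm z0 \<le> norm z1" and Re_q_z0: "Re (q z0) = \<delta>"
    and ge: "\<forall>z\<in>cball 0 (norm z0). \<delta> \<le> Re (q z)"
    using exists_minimal_norm_point_on_level[of "norm z1" "\<lambda>z. Re (q z)"] z1(2) by auto
  have "z0 \<in> ball 0 1"
    using \<open>norm z0 \<le> norm z1\<close> z1(1) by auto
  define x where "x = Re (z0 * deriv q z0)"
  define y where "y = Im (q z0)"
  have "Im (z0 * deriv q z0) = 0"
    by (rule Im_mult_deriv_eq_0_if_Re_min_on_sphere[OF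
          holomorphic_derivI[OF holq open_ball \<open>z0 \<in> ball 0 1\<close>]])
       (use ge Re_q_z0 in auto)
  then have "Re (z0 * deriv q z0 / q z0) = x * \<delta> / (\<delta>\<^sup>2 + y\<^sup>2)"
    using Re_q_z0 by (simp add: x_def y_def Re_divide)
  also have "\<dots> \<le> varsigma n p \<delta>"
  proof (rule mult_div_le_varsigma[OF \<delta>])
    have "real n \<le> - 2 * (real p - \<delta>) * x / ((real p - \<delta>)\<^sup>2 + y\<^sup>2)"
      unfolding x_def y_def
      by (rule jack_lemma_at_half_plane_boundary[OF \<delta>(2) holq holR q_eq
            \<open>z0 \<in> ball 0 1\<close> \<open>z0 \<noteq> 0\<close> ge Re_q_z0])
    moreover have "0 < (real p - \<delta>)\<^sup>2 + y\<^sup>2"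
      using \<delta>(2) by (simp add: add_pos_nonneg)
    ultimately show "real n * ((real p - \<delta>)\<^sup>2 + y\<^sup>2) \<le> - 2 * x * (real p - \<delta>)"
      by (simp add: le_divide_eq algebra_simps del: divide_minus_left)
  qed
  finally have "Re (z0 * deriv q z0 / q z0) \<le> varsigma n p \<delta>" .
  moreover have "varsigma n p \<delta> < Re (z0 * deriv q z0 / q z0)"
    using hyp \<open>z0 \<in> ball 0 1\<close> \<open>z0 \<noteq> 0\<close> by blast
  ultimately show False using leD by blast
qed

lemma suminf_eq_power_mult_shift:
  fixes a :: "nat \<Rightarrow> 'a::{real_normed_field,banach}"
  assumes "\<forall>k<m. a k = 0" and "summable (\<lambda>k. a k * w ^ k)"
  shows "summable (\<lambda>k. a (k + m) * w ^ k)"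
    and "(\<Sum>k. a k * w ^ k) = w ^ m * (\<Sum>k. a (k + m) * w ^ k)"
proof -
  show sum: "summable (\<lambda>k. a (k + m) * w ^ k)"
  proof (cases "w = 0")
    case True
    then show ?thesis
      using sums_summable[OF powser_sums_zero[of "\<lambda>k. a (k + m)"]] by simp
  next
    case False
    have "summable (\<lambda>k. a (k + m) * w ^ (k + m) / w ^ m)"
      using summable_divide[OF summable_ignore_initial_segment[OF assms(2)]] .
    then show ?thesis
      using False by (simp add: power_add)
  qed
  have "(\<Sum>k. a k * w ^ k) = (\<Sum>k. a (k + m) * w ^ (k + m)) + (\<Sum>i<m. a i * w ^ i)"
    by (rule suminf_split_initial_segment[OF assms(2)])
  also have "\<dots> = (\<Sum>k. w ^ m * (a (k + m) * w ^ k))"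
    using assms(1) by (simp add: power_add mult_ac)
  also have "\<dots> = w ^ m * (\<Sum>k. a (k + m) * w ^ k)"
    using suminf_mult[OF sum] by simp
  finally show "(\<Sum>k. a k * w ^ k) = w ^ m * (\<Sum>k. a (k + m) * w ^ k)" .
qed

lemma deriv_eq_on_open:
  assumes "open A" and "w \<in> A" and "\<forall>z\<in>A. F z = H z"
  shows "deriv F w = deriv H w"
  using assms by (intro deriv_cong_ev eventually_mono[OF eventually_nhds_in_open]) auto

lemma Flam_eq_power_mult:
  fixes f g :: "complex \<Rightarrow> complex"
  assumes "open A" and "g holomorphic_on A" and "\<forall>z\<in>A. f z = z ^ p + z ^ (p + n) * g z"
    and "w \<in> A"
  shows "Flam lam f w = w ^ p * (of_real (1 - lam + lam * p) + w ^ n *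
           (of_real (1 - lam + lam * (p + n)) * g w + of_real lam * w * deriv g w))"
proof -
  have "deriv f w = deriv (\<lambda>z. z ^ p + z ^ (p + n) * g z) w"
    using deriv_eq_on_open[OF assms(1,4,3)] .
  also have "\<dots> = of_nat p * w ^ (p - 1) + (of_nat (p + n) * w ^ (p + n - 1) * g w + w ^ (p + n) * deriv g w)"
    using holomorphic_derivI[OF assms(2,1,4)]
    by (intro DERIV_imp_deriv) (auto intro!: derivative_eq_intros)
  finally show ?thesis
    using assms(3,4) by (cases p; cases "p + n") (auto simp: Flam_def algebra_simps power_add)
qed

lemma mult_deriv_const_add_power_mult:
  fixes G :: "complex \<Rightarrow> complex"
  assumes "open A" and "G holomorphic_on A" and "w \<in> A"
  shows "w * deriv (\<lambda>z. c + z ^ n * G z) w = w ^ n * (of_nat n * G w + w * deriv G w)"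
proof -
  have "deriv (\<lambda>z. c + z ^ n * G z) w = of_nat n * w ^ (n - 1) * G w + w ^ n * deriv G w"
    using holomorphic_derivI[OF assms(2,1,3)]
    by (intro DERIV_imp_deriv) (auto intro!: derivative_eq_intros)
  then show ?thesis
    by (cases n) (auto simp: algebra_simps)
qed

lemma log_deriv_power_mult:
  fixes \<Phi> F :: "complex \<Rightarrow> complex"
  assumes "open A" and "\<Phi> holomorphic_on A" and "\<forall>z\<in>A. F z = z ^ p * \<Phi> z"
    and "w \<in> A" and "w \<noteq> 0" and "\<Phi> w \<noteq> 0"
  shows "w * deriv F w / F w = of_nat p + w * deriv \<Phi> w / \<Phi> w"
proof -
  have "deriv F w = deriv (\<lambda>z. z ^ p * \<Phi> z) w"
    using deriv_eq_on_open[OF assms(1,4,3)] .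
  also have "\<dots> = of_nat p * w ^ (p - 1) * \<Phi> w + w ^ p * deriv \<Phi> w"
    using holomorphic_derivI[OF assms(2,1,4)]
    by (intro DERIV_imp_deriv) (auto intro!: derivative_eq_intros)
  finally show ?thesis
    using assms(3-6) by (cases p) (auto simp: field_simps)
qed

lemma mult_deriv_log_deriv:
  fixes F :: "complex \<Rightarrow> complex"
  assumes "open A" and "F holomorphic_on A" and "z \<in> A"
    and "z \<noteq> 0" and "F z \<noteq> 0" and "deriv F z \<noteq> 0"
  shows "z * deriv (\<lambda>w. w * deriv F w / F w) z / (z * deriv F z / F z)
         = - (z * deriv F z / F z) + 1 + z * deriv (deriv F) z / deriv F z"
proof -
  have "deriv (\<lambda>w. w * deriv F w / F w) z
        = ((deriv F z + z * deriv (deriv F) z) * F z - z * deriv F z * deriv F z) / (F z * F z)"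
    using holomorphic_derivI[OF assms(2,1,3)]
      holomorphic_derivI[OF holomorphic_deriv[OF assms(2,1)] assms(1,3)] assms(5)
    by (intro DERIV_imp_deriv) (auto intro!: derivative_eq_intros simp: algebra_simps)
  then show ?thesis
    using assms(4-6) by (simp add: field_simps)
qed

lemma Flam_log_deriv_eq_of_power_series:
  fixes f :: "complex \<Rightarrow> complex" and a :: "nat \<Rightarrow> complex"
  assumes "n \<ge> 1" and "p \<ge> 1" and "0 \<le> lam"
    and a0: "\<forall>k < p + n. a k = 0"
    and f_eq: "\<forall>z \<in> ball 0 1. summable (\<lambda>k. a k * z ^ k) \<and> f z = z ^ p + (\<Sum>k. a k * z ^ k)"
    and F_nz: "\<forall>z \<in> ball 0 1 - {0}. Flam lam f z \<noteq> 0"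
  obtains q R where "q holomorphic_on ball 0 1" and "R holomorphic_on ball 0 1"
    and "\<forall>z\<in>ball 0 1. q z = of_nat p + z ^ n * R z"
    and "\<forall>z\<in>ball 0 1 - {0}. z * deriv (Flam lam f) z / Flam lam f z = q z"
proof -
  define g where "g z = (\<Sum>k. a (k + (p + n)) * z ^ k)" for z
  have "g holomorphic_on ball 0 1"
    using power_series_holomorphic[of 0 1 "\<lambda>k. a (k + (p + n))" g]
      suminf_eq_power_mult_shift(1)[OF a0] f_eq
    by (auto simp: g_def summable_sums)
  define G where "G z = of_real (1 - lam + lam * (p + n)) * g z + of_real lam * z * deriv g z" for z
  define \<Phi> where "\<Phi> z = of_real (1 - lam + lam * p) + z ^ n * G z" for z
  have "\<forall>z\<in>ball 0 1. f z = z ^ p + z ^ (p + n) * g z"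
    using suminf_eq_power_mult_shift(2)[OF a0] f_eq by (simp add: g_def)
  then have F_eq: "\<forall>z\<in>ball 0 1. Flam lam f z = z ^ p * \<Phi> z"
    unfolding \<Phi>_def G_def using Flam_eq_power_mult[OF open_ball \<open>g holomorphic_on ball 0 1\<close>] by blast
  have holG: "G holomorphic_on ball 0 1"
    unfolding G_def using \<open>g holomorphic_on ball 0 1\<close>
    by (auto intro!: holomorphic_intros)
  have hol\<Phi>: "\<Phi> holomorphic_on ball 0 1"
    unfolding \<Phi>_def by (intro holomorphic_intros holG)
  have \<Phi>_nz: "\<Phi> z \<noteq> 0" if "z \<in> ball 0 1" for z
  proof (cases "z = 0")
    case True
    have "\<Phi> 0 = of_real (1 - lam + lam * p)"
      using assms(1) by (simp add: \<Phi>_def)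
    moreover have "1 \<le> 1 - lam + lam * p"
      using assms(2,3) mult_left_mono[of 1 "real p" lam] by simp
    ultimately show ?thesis using True by (metis of_real_eq_0_iff not_one_le_zero)
  next
    case False
    then have "Flam lam f z \<noteq> 0" using F_nz that by blast
    then show ?thesis using F_eq that by auto
  qed
  show thesis
  proof
    show "(\<lambda>z. of_nat p + z * deriv \<Phi> z / \<Phi> z) holomorphic_on ball 0 1"
      using \<Phi>_nz by (auto intro!: holomorphic_intros hol\<Phi>)
    show "(\<lambda>z. (of_nat n * G z + z * deriv G z) / \<Phi> z) holomorphic_on ball 0 1"
      using \<Phi>_nz by (auto intro!: holomorphic_intros hol\<Phi> holG)
    show "\<forall>z\<in>ball 0 1. of_nat p + z * deriv \<Phi> z / \<Phi> z
                       = of_nat p + z ^ n * ((of_nat n * G z + z * deriv G z) / \<Phi> z)"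
      using mult_deriv_const_add_power_mult[OF open_ball holG] by (simp add: \<Phi>_def[abs_def])
    show "\<forall>z\<in>ball 0 1 - {0}. z * deriv (Flam lam f) z / Flam lam f z
                             = of_nat p + z * deriv \<Phi> z / \<Phi> z"
      using log_deriv_power_mult[OF open_ball hol\<Phi> F_eq] \<Phi>_nz by blast
  qed
qed

theorem corollary3p12:
  fixes n p :: nat and lam \<delta> :: real and f :: "complex \<Rightarrow> complex" and a :: "nat \<Rightarrow> complex"
  assumes "n \<ge> 1" and "p \<ge> 1"
    and "0 \<le> lam" and "lam \<le> 1"
    and "f holomorphic_on ball 0 1"
    and "\<forall>k < p + n. a k = 0"
    and "\<forall>z \<in> ball 0 1. summable (\<lambda>k. a k * z ^ k) \<and> f z = z ^ p + (\<Sum>k. a k * z ^ k)"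
    and "\<forall>z \<in> ball 0 1 - {0}. Flam lam f z * deriv (Flam lam f) z \<noteq> 0"
    and "0 \<le> \<delta>" and "\<delta> < real p"
    and "\<forall>z \<in> ball 0 1 - {0}.
           Re (- (z * deriv (Flam lam f) z / Flam lam f z) + 1
               + z * deriv (deriv (Flam lam f)) z / deriv (Flam lam f) z) > varsigma n p \<delta>"
  shows "\<forall>z \<in> ball 0 1 - {0}. Re (z * deriv (Flam lam f) z / Flam lam f z) > \<delta>"
proof -
  define F where "F = Flam lam f"
  obtain q R where holq: "q holomorphic_on ball 0 1" and holR: "R holomorphic_on ball 0 1"
    and q_eq: "\<forall>z\<in>ball 0 1. q z = of_nat p + z ^ n * R z"
    and F_q: "\<forall>z\<in>ball 0 1 - {0}. z * deriv F z / F z = q z"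
    using Flam_log_deriv_eq_of_power_series[OF assms(1-3,6,7)] assms(8) unfolding F_def by auto
  have holF: "F holomorphic_on ball 0 1"
    unfolding F_def Flam_def[abs_def] using assms(5)
    by (auto intro!: holomorphic_intros)
  have "varsigma n p \<delta> < Re (z * deriv q z / q z)" if z: "z \<in> ball 0 1 - {0}" for z
  proof -
    have "deriv q z = deriv (\<lambda>w. w * deriv F w / F w) z"
      by (rule deriv_eq_on_open[of "ball 0 1 - {0}"]) (use F_q z in auto)
    then have "z * deriv q z / q z = - (z * deriv F z / F z) + 1 + z * deriv (deriv F) z / deriv F z"
      using mult_deriv_log_deriv[OF open_ball holF] F_q z assms(8) unfolding F_def by auto
    then show ?thesis using assms(11) z unfolding F_def by auto
  qed
  then have "\<forall>z\<in>ball 0 1. \<delta> < Re (q z)"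
    using Re_gt_if_Re_log_deriv_gt_varsigma[OF assms(1,9,10) holq holR q_eq] by blast
  then show ?thesis using F_q unfolding F_def by auto
qed

end
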